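(* Let $G=(V,E)$ be a connected comparability graph. Then the acyclic orientations of $E$ whose induced posets have the maximum number of linear extensions (among all acyclic orientations of $E$) are exactly the transitive orientations of $G$.
   Context: A comparability graph is a simple undirected graph $G=(V,E)$ for which there is a partial order on $V$ under which two distinct vertices $u,v$ are comparable if and only if $\{u,v\}\in E$. An acyclic orientation of $E$ induces a partial order on $V$ in which $u<v$ if and only if there is a directed path from $u$ to $v$. An acyclic orientation $O$ of $E$ is a transitive orientation of $G$ if the comparability graph of the poset induced by $O$ equals $G$ (i.e. two distinct vertices are comparable in the induced poset iff they are adjacent in $G$). A linear extension of a partial order $P$ on an $n$-element set $V$ is a bijection $\sigma:V\to[n]$ such that $u<_P v$ implies $\sigma(u)<\sigma(v)$. *)

theory Defs
  imports "HOL-Library.FuncSet"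
begin

definition simple_graph :: "'a set \<Rightarrow> 'a set set \<Rightarrow> bool" where
  "simple_graph V E \<longleftrightarrow> finite V \<and>
     (\<forall>e\<in>E. \<exists>u v. u \<in> V \<and> v \<in> V \<and> u \<noteq> v \<and> e = {u, v})"

definition connected_graph :: "'a set \<Rightarrow> 'a set set \<Rightarrow> bool" where
  "connected_graph V E \<longleftrightarrow>
     (\<forall>u\<in>V. \<forall>v\<in>V. (u, v) \<in> {(x, y). {x, y} \<in> E}\<^sup>*)"

definition comparability_graph :: "'a set \<Rightarrow> 'a set set \<Rightarrow> bool" where
  "comparability_graph V E \<longleftrightarrow> simple_graph V E \<and>
     (\<exists>R. R \<subseteq> V \<times> V \<and> irrefl R \<and> trans R \<and>
        (\<forall>u\<in>V. \<forall>v\<in>V. u \<noteq> v \<longrightarrow> ({u, v} \<in> E \<longleftrightarrow> (u, v) \<in> R \<or> (v, u) \<in> R)))"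

text \<open>An orientation of E: a set of arcs, each arc along an edge, each edge
  receiving a direction. Acyclicity (no directed cycle, in particular no 2-cycle)
  ensures each edge gets exactly one direction.\<close>
definition acyclic_orientation :: "'a set \<Rightarrow> 'a set set \<Rightarrow> ('a \<times> 'a) set \<Rightarrow> bool" where
  "acyclic_orientation V E Or \<longleftrightarrow>
     (\<forall>u v. (u, v) \<in> Or \<longrightarrow> {u, v} \<in> E) \<and>
     (\<forall>u v. {u, v} \<in> E \<longrightarrow> (u, v) \<in> Or \<or> (v, u) \<in> Or) \<and>
     acyclic Or"

definition transitive_orientation :: "'a set \<Rightarrow> 'a set set \<Rightarrow> ('a \<times> 'a) set \<Rightarrow> bool" where
  "transitive_orientation V E Or \<longleftrightarrow> acyclic_orientation V E Or \<and>
     (\<forall>u\<in>V. \<forall>v\<in>V. u \<noteq> v \<longrightarrow> ({u, v} \<in> E \<longleftrightarrow> (u, v) \<in> Or\<^sup>+ \<or> (v, u) \<in> Or\<^sup>+))"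

definition linear_extensions :: "'a set \<Rightarrow> ('a \<times> 'a) set \<Rightarrow> ('a \<Rightarrow> nat) set" where
  "linear_extensions V P = {\<sigma> \<in> extensional V. bij_betw \<sigma> V {1..card V} \<and>
     (\<forall>u v. (u, v) \<in> P \<longrightarrow> \<sigma> u < \<sigma> v)}"

definition num_linext :: "'a set \<Rightarrow> ('a \<times> 'a) set \<Rightarrow> nat" where
  "num_linext V Or = card (linear_extensions V (Or\<^sup>+))"

end

theory Submission
  imports Defs Complex_Main "HOL-Library.Infinite_Set"
begin

(*
  The number e(P) of linear extensions of a finite strict poset P on an n-set V is,
  up to the factor n!, the leading coefficient of its order polynomial: the number
  of order-preserving maps V -> {0..m} lies between e(P) * C(m+1,n) and
  e(P) * C(m+1,n) + n^2 (m+1)^(n-1).  By Stanley's transfer map (differences along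
  the order) these maps are in bijection with the maps g : V -> {0..m} whose sum
  along every chain is at most m, and this second family depends only on the
  comparability graph of P.  Having fewer comparabilities gives more chain-bounded
  maps, hence at least as many linear extensions; if some pair is comparable in P
  but not in Q, an explicit box of k^n chain-bounded maps for Q (at m = 4nk)
  misses P, which forces e(P) < e(Q).

  For a comparability graph G with a transitive orientation R, every acyclic
  orientation O satisfies comp(R) = E <= comp(O+), so e(O+) <= e(R), with strict
  inequality exactly when O+ has a comparability outside E, i.e. when O is not
  transitive.  This yields the theorem.
*)

section \<open>Chains and the two families of maps\<close>

definition comparable :: "('a \<times> 'a) set \<Rightarrow> 'a \<Rightarrow> 'a \<Rightarrow> bool" where
  "comparable P x y \<longleftrightarrow> (x, y) \<in> P \<or> (y, x) \<in> P"

definition is_chain :: "('a \<times> 'a) set \<Rightarrow> 'a set \<Rightarrow> bool" where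
  "is_chain P C \<longleftrightarrow> (\<forall>x\<in>C. \<forall>y\<in>C. x \<noteq> y \<longrightarrow> comparable P x y)"

text \<open>Order-preserving maps into \<open>{0..m}\<close>; their number is the order polynomial.\<close>
definition order_maps :: "'a set \<Rightarrow> ('a \<times> 'a) set \<Rightarrow> nat \<Rightarrow> ('a \<Rightarrow> nat) set" where
  "order_maps V P m = {f \<in> V \<rightarrow>\<^sub>E {0..m}. \<forall>u v. (u, v) \<in> P \<longrightarrow> f u \<le> f v}"

text \<open>Maps into \<open>{0..m}\<close> whose sum along every chain is at most \<open>m\<close>
  (lattice points of the dilated chain polytope).\<close>
definition chain_maps :: "'a set \<Rightarrow> ('a \<times> 'a) set \<Rightarrow> nat \<Rightarrow> ('a \<Rightarrow> nat) set" where
  "chain_maps V P m = {g \<in> V \<rightarrow>\<^sub>E {0..m}. \<forall>C. C \<subseteq> V \<longrightarrow> is_chain P C \<longrightarrow> sum g C \<le> m}"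

lemma finite_chain_maps: "finite V \<Longrightarrow> finite (chain_maps V P m)"
  unfolding chain_maps_def by (simp add: finite_PiE)

text \<open>Chain-bounded maps only see comparabilities, and fewer comparabilities
  mean fewer constraints.\<close>
lemma chain_maps_antimono:
  assumes "\<forall>x\<in>V. \<forall>y\<in>V. x \<noteq> y \<longrightarrow> comparable Q x y \<longrightarrow> comparable P x y"
  shows "chain_maps V P m \<subseteq> chain_maps V Q m"
proof -
  have "is_chain P C" if "C \<subseteq> V" "is_chain Q C" for C
    using that assms unfolding is_chain_def by blast
  then show ?thesis unfolding chain_maps_def by blast
qed

section \<open>Stanley's transfer map and the order polynomial\<close>

locale finite_strict_poset =
  fixes V :: "'a set" and P :: "('a \<times> 'a) set"
  assumes finite_V: "finite V" and P_on_V: "P \<subseteq> V \<times> V"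
    and trans_P: "trans P" and irrefl_P: "irrefl P"
begin

lemma P_irrefl: "(x, x) \<notin> P"
  using irrefl_P by (simp add: irrefl_def)

lemma P_trans: "(x, y) \<in> P \<Longrightarrow> (y, z) \<in> P \<Longrightarrow> (x, z) \<in> P"
  using trans_P by (meson transD)

lemma wf_P: "wf P"
proof (rule finite_acyclic_wf)
  show "finite P" using P_on_V finite_V by (meson finite_SigmaI finite_subset)
  show "acyclic P" using trans_P irrefl_P by (simp add: acyclic_irrefl trancl_id)
qed

definition below :: "'a \<Rightarrow> 'a set" where
  "below v = {u. (u, v) \<in> P}"

lemma finite_below: "finite (below v)"
  using P_on_V finite_V unfolding below_def by (auto intro: finite_subset)

definition top_chains :: "'a \<Rightarrow> 'a set set" where
  "top_chains v = {C. C \<subseteq> V \<and> is_chain P C \<and> v \<in> C \<and> (\<forall>c\<in>C. c \<noteq> v \<longrightarrow> (c, v) \<in> P)}"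

lemma finite_top_chains: "finite (top_chains v)"
  using finite_V unfolding top_chains_def by (auto intro: finite_subset[of _ "Pow V"])

lemma top_chain_finite: "C \<in> top_chains v \<Longrightarrow> finite C"
  using finite_V unfolding top_chains_def by (auto intro: finite_subset)

lemma singleton_top_chain: "v \<in> V \<Longrightarrow> {v} \<in> top_chains v"
  unfolding top_chains_def is_chain_def by auto

lemma chain_has_top:
  assumes "finite C" "C \<noteq> {}" "C \<subseteq> V" "is_chain P C"
  shows "\<exists>t\<in>C. C \<in> top_chains t"
  using assms
proof (induction C rule: finite_ne_induct)
  case (singleton x)
  then show ?case using singleton_top_chain by auto
next
  case (insert x F)
  then obtain t where t: "t \<in> F" "F \<in> top_chains t"
    unfolding is_chain_def by auto
  have "comparable P x t"
    using insert.hyps insert.prems t(1) unfolding is_chain_def by auto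
  then show ?case
  proof (cases "(x, t) \<in> P")
    case True
    then show ?thesis using t insert unfolding top_chains_def by auto
  next
    case False
    then have tx: "(t, x) \<in> P" using \<open>comparable P x t\<close> unfolding comparable_def by blast
    have "(c, x) \<in> P" if "c \<in> F" for c
    proof -
      have "c = t \<or> (c, t) \<in> P" using that t unfolding top_chains_def by blast
      then show ?thesis using tx P_trans by blast
    qed
    then show ?thesis using insert unfolding top_chains_def by auto
  qed
qed

lemma top_chain_extend:
  assumes "C \<in> top_chains u" "(u, v) \<in> P"
  shows "insert v C \<in> top_chains v" "v \<notin> C"
proof -
  have below_v: "(c, v) \<in> P" if "c \<in> C" for c
  proof -
    have "c = u \<or> (c, u) \<in> P" using that assms(1) unfolding top_chains_def by blast
    then show ?thesis using assms(2) P_trans by blast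
  qed
  then show "v \<notin> C" using P_irrefl by blast
  show "insert v C \<in> top_chains v"
    using assms below_v P_on_V unfolding top_chains_def is_chain_def comparable_def by auto
qed

lemma top_chain_remove:
  assumes "C \<in> top_chains v" "C - {v} \<noteq> {}"
  obtains t where "(t, v) \<in> P" "C - {v} \<in> top_chains t"
proof -
  have "finite (C - {v})" "C - {v} \<subseteq> V" "is_chain P (C - {v})"
    using assms(1) top_chain_finite unfolding top_chains_def is_chain_def by auto
  then obtain t where "t \<in> C - {v}" "C - {v} \<in> top_chains t"
    using chain_has_top assms(2) by blast
  moreover from this have "(t, v) \<in> P" using assms(1) unfolding top_chains_def by blast
  ultimately show ?thesis using that by blast
qed

text \<open>The transfer map: the jump of \<open>f\<close> at \<open>v\<close> over the largest value below \<open>v\<close>.\<close>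
definition jump :: "('a \<Rightarrow> nat) \<Rightarrow> 'a \<Rightarrow> nat" where
  "jump f = (\<lambda>v\<in>V. f v - Max (insert 0 (f ` below v)))"

text \<open>Its inverse: the largest sum of \<open>g\<close> along a chain with top \<open>v\<close>.\<close>
definition chain_max :: "('a \<Rightarrow> nat) \<Rightarrow> 'a \<Rightarrow> nat" where
  "chain_max g = (\<lambda>v\<in>V. Max (sum g ` top_chains v))"

lemma order_map_below_le: "f \<in> order_maps V P m \<Longrightarrow> Max (insert 0 (f ` below v)) \<le> f v"
  using finite_below unfolding order_maps_def below_def by auto

lemma order_map_le: "f \<in> order_maps V P m \<Longrightarrow> v \<in> V \<Longrightarrow> f v \<le> m"
  unfolding order_maps_def PiE_iff by auto

lemma jump_sum_le:
  assumes f: "f \<in> order_maps V P m"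
  shows "C \<in> top_chains v \<Longrightarrow> sum (jump f) C \<le> f v"
proof (induction "card C" arbitrary: C v rule: less_induct)
  case less
  have "v \<in> V" "v \<in> C" "finite C" using less.prems top_chain_finite unfolding top_chains_def by auto
  then have split: "sum (jump f) C = f v - Max (insert 0 (f ` below v)) + sum (jump f) (C - {v})"
    by (simp add: sum.remove jump_def)
  show ?case
  proof (cases "C - {v} = {}")
    case True
    then have "sum (jump f) (C - {v}) = 0" by (simp only: sum.empty)
    then show ?thesis using split by simp
  next
    case False
    then obtain t where t: "(t, v) \<in> P" "C - {v} \<in> top_chains t"
      using top_chain_remove less.prems by blast
    have "card (C - {v}) < card C" using \<open>finite C\<close> \<open>v \<in> C\<close> by (meson card_Diff1_less)
    then have "sum (jump f) (C - {v}) \<le> f t" using less t by blast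
    moreover have "f t \<le> Max (insert 0 (f ` below v))"
      using t finite_below unfolding below_def by auto
    ultimately show ?thesis using split order_map_below_le[OF f, of v] by linarith
  qed
qed

lemma jump_sum_attained:
  assumes f: "f \<in> order_maps V P m"
  shows "v \<in> V \<Longrightarrow> \<exists>C\<in>top_chains v. sum (jump f) C = f v"
proof (induction v rule: wf_induct[OF wf_P])
  case (1 v)
  have jump_v: "jump f v = f v - Max (insert 0 (f ` below v))"
    using 1 unfolding jump_def by simp
  show ?case
  proof (cases "below v = {}")
    case True
    then show ?thesis using jump_v singleton_top_chain[OF 1(2)] by (intro bexI[of _ "{v}"]) auto
  next
    case False
    then obtain u where u: "u \<in> below v" "f u = Max (f ` below v)"
      using Max_in[of "f ` below v"] finite_below by fastforce
    then have Max_u: "Max (insert 0 (f ` below v)) = f u"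
      using finite_below False by (simp add: Max_insert)
    have uv: "(u, v) \<in> P" using u unfolding below_def by simp
    then obtain Cu where Cu: "Cu \<in> top_chains u" "sum (jump f) Cu = f u"
      using 1(1) P_on_V by blast
    have "sum (jump f) (insert v Cu) = jump f v + f u"
      using top_chain_extend[OF Cu(1) uv] top_chain_finite[OF Cu(1)] Cu by simp
    also have "\<dots> = f v" using jump_v Max_u order_map_below_le[OF f, of v] by simp
    finally show ?thesis using top_chain_extend[OF Cu(1) uv] by blast
  qed
qed

lemma chain_max_ge: "C \<in> top_chains v \<Longrightarrow> sum g C \<le> chain_max g v"
  using finite_top_chains unfolding chain_max_def top_chains_def by auto

lemma chain_max_attained: "v \<in> V \<Longrightarrow> \<exists>C\<in>top_chains v. chain_max g v = sum g C"
  using Max_in[of "sum g ` top_chains v"] finite_top_chains singleton_top_chain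
  unfolding chain_max_def by fastforce

lemma chain_max_recursion:
  assumes v: "v \<in> V"
  shows "chain_max g v = g v + Max (insert 0 (chain_max g ` below v))"
    (is "_ = g v + ?M")
proof (rule antisym)
  obtain C where C: "C \<in> top_chains v" "chain_max g v = sum g C"
    using chain_max_attained[OF v] by blast
  have split: "sum g C = g v + sum g (C - {v})"
    using C(1) top_chain_finite[OF C(1)] unfolding top_chains_def by (simp add: sum.remove)
  show "chain_max g v \<le> g v + ?M"
  proof (cases "C - {v} = {}")
    case True
    then have "sum g (C - {v}) = 0" by (simp only: sum.empty)
    then show ?thesis using C split by simp
  next
    case False
    then obtain t where t: "(t, v) \<in> P" "C - {v} \<in> top_chains t"
      using top_chain_remove C(1) by blast
    have "sum g (C - {v}) \<le> chain_max g t" using chain_max_ge[OF t(2)] .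
    also have "\<dots> \<le> ?M" using t finite_below by (auto simp: below_def)
    finally show ?thesis using C split by simp
  qed
next
  have "g v + x \<le> chain_max g v" if x: "x \<in> insert 0 (chain_max g ` below v)" for x
  proof (cases "x = 0")
    case True
    then show ?thesis using chain_max_ge[OF singleton_top_chain[OF v], of g] by simp
  next
    case False
    then obtain t where t: "(t, v) \<in> P" "x = chain_max g t" using x unfolding below_def by auto
    then obtain C where C: "C \<in> top_chains t" "chain_max g t = sum g C"
      using chain_max_attained P_on_V by blast
    have "g v + x = sum g (insert v C)"
      using top_chain_extend[OF C(1) t(1)] top_chain_finite[OF C(1)] C t by simp
    then show ?thesis using chain_max_ge[OF top_chain_extend(1)[OF C(1) t(1)]] by simp
  qed
  moreover have "?M \<in> insert 0 (chain_max g ` below v)"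
    using finite_below by (intro Max_in) auto
  ultimately show "g v + ?M \<le> chain_max g v" by blast
qed

lemma jump_in_chain_maps:
  assumes f: "f \<in> order_maps V P m"
  shows "jump f \<in> chain_maps V P m"
proof -
  have "jump f v \<le> m" if "v \<in> V" for v
    using that order_map_le[OF f that] unfolding jump_def by simp
  then have "jump f \<in> V \<rightarrow>\<^sub>E {0..m}" unfolding jump_def by (simp add: PiE_iff)
  moreover have "sum (jump f) C \<le> m" if C: "C \<subseteq> V" "is_chain P C" for C
  proof (cases "C = {}")
    case False
    then obtain t where "t \<in> C" "C \<in> top_chains t"
      using chain_has_top C finite_V finite_subset by metis
    then show ?thesis
      using jump_sum_le[OF f] order_map_le[OF f] C by (meson le_trans subsetD)
  qed simp
  ultimately show ?thesis unfolding chain_maps_def by blast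
qed

lemma chain_max_in_order_maps:
  assumes g: "g \<in> chain_maps V P m"
  shows "chain_max g \<in> order_maps V P m"
proof -
  have "chain_max g v \<le> m" if v: "v \<in> V" for v
    using chain_max_attained[OF v, of g] g unfolding chain_maps_def top_chains_def by auto
  then have "chain_max g \<in> V \<rightarrow>\<^sub>E {0..m}" unfolding chain_max_def by (simp add: PiE_iff)
  moreover have "chain_max g u \<le> chain_max g v" if uv: "(u, v) \<in> P" for u v
  proof -
    have "chain_max g u \<le> Max (insert 0 (chain_max g ` below v))"
      using uv finite_below by (auto simp: below_def)
    moreover have "v \<in> V" using uv P_on_V by auto
    then have "chain_max g v = g v + Max (insert 0 (chain_max g ` below v))"
      by (rule chain_max_recursion)
    ultimately show ?thesis by linarith
  qed
  ultimately show ?thesis unfolding order_maps_def by blast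
qed

lemma chain_max_jump:
  assumes f: "f \<in> order_maps V P m"
  shows "chain_max (jump f) = f"
proof (rule extensionalityI[of _ V])
  show "chain_max (jump f) \<in> extensional V" unfolding chain_max_def by simp
  show "f \<in> extensional V" using f unfolding order_maps_def PiE_def by blast
  fix v assume v: "v \<in> V"
  have "Max (sum (jump f) ` top_chains v) = f v"
  proof (rule Max_eqI)
    show "finite (sum (jump f) ` top_chains v)" using finite_top_chains by simp
    show "y \<le> f v" if "y \<in> sum (jump f) ` top_chains v" for y
      using that jump_sum_le[OF f] by auto
    show "f v \<in> sum (jump f) ` top_chains v"
      using jump_sum_attained[OF f v] by (metis image_eqI)
  qed
  then show "chain_max (jump f) v = f v" using v unfolding chain_max_def by simp
qed

lemma jump_chain_max:
  assumes g: "g \<in> chain_maps V P m"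
  shows "jump (chain_max g) = g"
proof (rule extensionalityI[of _ V])
  show "jump (chain_max g) \<in> extensional V" unfolding jump_def by simp
  show "g \<in> extensional V" using g unfolding chain_maps_def PiE_def by blast
  fix v assume v: "v \<in> V"
  define M where "M = Max (insert 0 (chain_max g ` below v))"
  have "chain_max g v = g v + M" unfolding M_def by (rule chain_max_recursion[OF v])
  moreover have "jump (chain_max g) v = chain_max g v - M" using v unfolding jump_def M_def by simp
  ultimately show "jump (chain_max g) v = g v" by simp
qed

theorem card_order_maps_eq_chain_maps: "card (order_maps V P m) = card (chain_maps V P m)"
proof -
  have "bij_betw jump (order_maps V P m) (chain_maps V P m)"
    by (rule bij_betw_byWitness[where f'=chain_max])
      (auto simp: chain_max_jump jump_chain_max jump_in_chain_maps chain_max_in_order_maps)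
  then show ?thesis by (rule bij_betw_same_card)
qed

end

section \<open>Linear extensions and order-preserving maps\<close>

definition ranked_maps :: "'a set \<Rightarrow> ('a \<times> 'a) set \<Rightarrow> nat set \<Rightarrow> ('a \<Rightarrow> nat) set" where
  "ranked_maps V P B = {\<sigma> \<in> extensional V. bij_betw \<sigma> V B \<and> (\<forall>u v. (u, v) \<in> P \<longrightarrow> \<sigma> u < \<sigma> v)}"

lemma linear_extensions_eq_ranked_maps: "linear_extensions V P = ranked_maps V P {1..card V}"
  unfolding linear_extensions_def ranked_maps_def ..

lemma strict_mono_bij_exists:
  fixes A B :: "'b :: wellorder set"
  assumes "finite A" "finite B" "card A = card B"
  obtains h where "bij_betw h A B" "strict_mono_on A h"
proof -
  obtain hA where hA: "bij_betw hA {..<card A} A" "strict_mono_on {..<card A} hA"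
    using ex_bij_betw_strict_mono_card[OF assms(1)] by blast
  obtain hB where hB: "bij_betw hB {..<card A} B" "strict_mono_on {..<card A} hB"
    using ex_bij_betw_strict_mono_card[OF assms(2)] assms(3) by metis
  define h where "h = hB \<circ> inv_into {..<card A} hA"
  have inv: "bij_betw (inv_into {..<card A} hA) A {..<card A}"
    using hA(1) by (rule bij_betw_inv_into)
  have "strict_mono_on A h"
  proof (rule strict_mono_onI)
    fix x y assume xy: "x \<in> A" "y \<in> A" "x < y"
    let ?i = "inv_into {..<card A} hA"
    have "?i x \<in> {..<card A}" "?i y \<in> {..<card A}" using inv xy bij_betwE by blast+
    moreover have "hA (?i x) < hA (?i y)"
      using xy hA(1) by (simp add: bij_betw_def f_inv_into_f)
    ultimately have "?i x < ?i y" using strict_mono_on_less[OF hA(2)] by blast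
    then show "h x < h y"
      using hB(2) \<open>?i x \<in> _\<close> \<open>?i y \<in> _\<close> unfolding h_def by (simp add: strict_mono_onD)
  qed
  moreover have "bij_betw h A B" unfolding h_def using bij_betw_trans[OF inv hB(1)] .
  ultimately show ?thesis using that by blast
qed

lemma strict_mono_on_inv_into:
  fixes h :: "'b :: linorder \<Rightarrow> 'c :: linorder"
  assumes "bij_betw h B A" "strict_mono_on B h"
  shows "strict_mono_on A (inv_into B h)"
proof (rule strict_mono_onI)
  fix x y assume xy: "x \<in> A" "y \<in> A" "x < y"
  have "inv_into B h x \<in> B" "inv_into B h y \<in> B"
    using bij_betw_inv_into[OF assms(1)] xy bij_betwE by blast+
  moreover have "h (inv_into B h x) < h (inv_into B h y)"
    using xy assms(1) by (simp add: bij_betw_def f_inv_into_f)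
  ultimately show "inv_into B h x < inv_into B h y" using strict_mono_on_less[OF assms(2)] by blast
qed

text \<open>Relabelling the values along a strictly monotone bijection \<open>h : B \<rightarrow> A\<close>
  injects the ranked maps onto \<open>B\<close> into those onto \<open>A\<close>.\<close>
lemma card_ranked_maps_le:
  assumes V: "finite V" and P: "P \<subseteq> V \<times> V" and h: "bij_betw h B A" "strict_mono_on B h"
  shows "card (ranked_maps V P B) \<le> card (ranked_maps V P A)"
proof (rule card_inj_on_le)
  let ?F = "\<lambda>\<sigma>. restrict (h \<circ> \<sigma>) V"
  show "inj_on ?F (ranked_maps V P B)"
  proof (rule inj_onI)
    fix \<sigma> \<tau> assume \<sigma>: "\<sigma> \<in> ranked_maps V P B" and \<tau>: "\<tau> \<in> ranked_maps V P B" and eq: "?F \<sigma> = ?F \<tau>"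
    show "\<sigma> = \<tau>"
    proof (rule extensionalityI[of _ V])
      show "\<sigma> \<in> extensional V" "\<tau> \<in> extensional V" using \<sigma> \<tau> unfolding ranked_maps_def by auto
      fix v assume v: "v \<in> V"
      have "\<sigma> v \<in> B" "\<tau> v \<in> B" using \<sigma> \<tau> v unfolding ranked_maps_def by (auto dest: bij_betwE)
      moreover have "h (\<sigma> v) = h (\<tau> v)" using fun_cong[OF eq, of v] v by simp
      ultimately show "\<sigma> v = \<tau> v" using h(1) unfolding bij_betw_def by (meson inj_onD)
    qed
  qed
  show "?F ` ranked_maps V P B \<subseteq> ranked_maps V P A"
  proof
    fix \<rho> assume "\<rho> \<in> ?F ` ranked_maps V P B"
    then obtain \<sigma> where \<sigma>: "\<sigma> \<in> ranked_maps V P B" and \<rho>: "\<rho> = ?F \<sigma>" by blast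
    then have "bij_betw \<sigma> V B" and \<sigma>_less: "\<forall>u v. (u, v) \<in> P \<longrightarrow> \<sigma> u < \<sigma> v"
      unfolding ranked_maps_def by auto
    then have "bij_betw \<rho> V A" unfolding \<rho> using bij_betw_trans[OF _ h(1)]
      by (metis bij_betw_cong restrict_apply')
    moreover have "\<rho> u < \<rho> v" if uv: "(u, v) \<in> P" for u v
    proof -
      have "u \<in> V" "v \<in> V" using uv P by auto
      moreover from this have "\<sigma> u \<in> B" "\<sigma> v \<in> B" using \<open>bij_betw \<sigma> V B\<close> bij_betwE by blast+
      ultimately show ?thesis using \<sigma>_less uv h(2) unfolding \<rho> by (simp add: strict_mono_onD)
    qed
    ultimately show "\<rho> \<in> ranked_maps V P A" unfolding ranked_maps_def \<rho> by auto
  qed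
  show "finite (ranked_maps V P A)"
  proof (cases "finite A")
    case True
    have "ranked_maps V P A \<subseteq> V \<rightarrow>\<^sub>E A"
      unfolding ranked_maps_def by (auto simp: bij_betw_def PiE_iff extensional_def)
    then show ?thesis using V True by (meson finite_PiE finite_subset)
  next
    case False
    then have "ranked_maps V P A = {}" using V unfolding ranked_maps_def by (auto dest: bij_betw_finite)
    then show ?thesis by simp
  qed
qed

lemma card_ranked_maps_eq:
  assumes "finite V" "P \<subseteq> V \<times> V" "finite A" "finite B" "card A = card B"
  shows "card (ranked_maps V P A) = card (ranked_maps V P B)"
proof -
  obtain h where h: "bij_betw h A B" "strict_mono_on A h"
    using strict_mono_bij_exists assms(3-5) by blast
  show ?thesis
    using card_ranked_maps_le[OF assms(1,2) h]
      card_ranked_maps_le[OF assms(1,2) bij_betw_inv_into[OF h(1)] strict_mono_on_inv_into[OF h]]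
    by simp
qed

context finite_strict_poset
begin

lemma order_maps_onto_eq_ranked_maps:
  assumes A: "A \<subseteq> {0..m}" "card A = card V"
  shows "{f \<in> order_maps V P m. f ` V = A} = ranked_maps V P A"
proof (intro set_eqI iffI)
  fix f assume f: "f \<in> {f \<in> order_maps V P m. f ` V = A}"
  then have "inj_on f V" using A(2) finite_V by (auto intro: eq_card_imp_inj_on)
  have "f u < f v" if uv: "(u, v) \<in> P" for u v
  proof -
    have "u \<in> V" "v \<in> V" "u \<noteq> v" using uv P_on_V P_irrefl by auto
    then have "f u \<noteq> f v" using \<open>inj_on f V\<close> by (auto dest: inj_onD)
    moreover have "f u \<le> f v" using f uv unfolding order_maps_def by auto
    ultimately show ?thesis by simp
  qed
  then show "f \<in> ranked_maps V P A"
    using f \<open>inj_on f V\<close> unfolding order_maps_def ranked_maps_def bij_betw_def PiE_def by auto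
next
  fix f assume "f \<in> ranked_maps V P A"
  then show "f \<in> {f \<in> order_maps V P m. f ` V = A}"
    using A(1) unfolding order_maps_def ranked_maps_def bij_betw_def
    by (auto simp: PiE_iff less_imp_le)
qed

text \<open>Injective order-preserving maps into \<open>{0..m}\<close> are counted by choosing the
  image and a linear extension.\<close>
lemma card_injective_order_maps:
  "card {f \<in> order_maps V P m. inj_on f V} = card (linear_extensions V P) * ((m + 1) choose card V)"
proof -
  let ?images = "{A. A \<subseteq> {0..m} \<and> card A = card V}"
  have union: "{f \<in> order_maps V P m. inj_on f V} = (\<Union>A\<in>?images. {f \<in> order_maps V P m. f ` V = A})"
  proof (intro set_eqI iffI)
    fix f assume f: "f \<in> {f \<in> order_maps V P m. inj_on f V}"
    then have "f ` V \<subseteq> {0..m}" unfolding order_maps_def by auto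
    moreover have "card (f ` V) = card V" using f by (simp add: card_image)
    ultimately show "f \<in> (\<Union>A\<in>?images. {f \<in> order_maps V P m. f ` V = A})" using f by blast
  next
    fix f assume "f \<in> (\<Union>A\<in>?images. {f \<in> order_maps V P m. f ` V = A})"
    then show "f \<in> {f \<in> order_maps V P m. inj_on f V}" using finite_V eq_card_imp_inj_on by force
  qed
  have each: "card {f \<in> order_maps V P m. f ` V = A} = card (linear_extensions V P)" if "A \<in> ?images" for A
  proof -
    have "finite A" using that finite_subset by auto
    then show ?thesis
      using that order_maps_onto_eq_ranked_maps card_ranked_maps_eq[OF finite_V P_on_V, of A "{1..card V}"]
      by (simp add: linear_extensions_eq_ranked_maps)
  qed
  have "card (\<Union>A\<in>?images. {f \<in> order_maps V P m. f ` V = A})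
      = (\<Sum>A\<in>?images. card {f \<in> order_maps V P m. f ` V = A})"
  proof (rule card_UN_disjoint)
    show "finite ?images" by (rule finite_subset[of _ "Pow {0..m}"]) auto
    show "\<forall>A\<in>?images. finite {f \<in> order_maps V P m. f ` V = A}"
      using finite_V unfolding order_maps_def by (simp add: finite_PiE)
  qed blast
  also have "\<dots> = card ?images * card (linear_extensions V P)" using each by simp
  also have "card ?images = (m + 1) choose card V" using n_subsets[of "{0..m}" "card V"] by simp
  finally show ?thesis using union by simp
qed

end

text \<open>Maps identifying two given points are determined by their values off one of them.\<close>
lemma card_maps_identifying:
  assumes V: "finite V" and uv: "u \<in> V" "v \<in> V" "u \<noteq> v"
  shows "card {f \<in> V \<rightarrow>\<^sub>E {0..m::nat}. f u = f v} \<le> (m + 1) ^ (card V - 1)"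
proof -
  let ?S = "{f \<in> V \<rightarrow>\<^sub>E {0..m}. f u = f v}"
  let ?r = "\<lambda>f. restrict f (V - {v})"
  have "inj_on ?r ?S"
  proof (rule inj_onI)
    fix f g assume f: "f \<in> ?S" and g: "g \<in> ?S" and eq: "?r f = ?r g"
    have "f w = g w" if "w \<in> V" for w
    proof (cases "w = v")
      case True
      have "f u = g u" using fun_cong[OF eq, of u] uv by simp
      then show ?thesis using f g True by simp
    next
      case False
      then show ?thesis using fun_cong[OF eq, of w] that by simp
    qed
    then show "f = g" using f g by (auto intro: extensionalityI[of _ V] simp: PiE_def)
  qed
  moreover have "?r ` ?S \<subseteq> (V - {v}) \<rightarrow>\<^sub>E {0..m}" by (force simp: restrict_PiE_iff)
  ultimately have "card ?S \<le> card ((V - {v}) \<rightarrow>\<^sub>E {0..m})"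
    using V by (intro card_inj_on_le) (auto simp: finite_PiE)
  also have "\<dots> = (m + 1) ^ (card V - 1)" using V uv by (simp add: card_PiE)
  finally show ?thesis .
qed

lemma card_noninjective_maps:
  assumes V: "finite V"
  shows "card {f \<in> V \<rightarrow>\<^sub>E {0..m::nat}. \<not> inj_on f V} \<le> card V * card V * (m + 1) ^ (card V - 1)"
proof -
  let ?pairs = "{p \<in> V \<times> V. fst p \<noteq> snd p}"
  let ?ident = "\<lambda>p. {f \<in> V \<rightarrow>\<^sub>E {0..m}. f (fst p) = f (snd p)}"
  have "{f \<in> V \<rightarrow>\<^sub>E {0..m}. \<not> inj_on f V} \<subseteq> (\<Union>p\<in>?pairs. ?ident p)"
  proof
    fix f assume f: "f \<in> {f \<in> V \<rightarrow>\<^sub>E {0..m}. \<not> inj_on f V}"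
    then obtain x y where "x \<in> V" "y \<in> V" "x \<noteq> y" "f x = f y" unfolding inj_on_def by blast
    then show "f \<in> (\<Union>p\<in>?pairs. ?ident p)" using f by (intro UN_I[of "(x, y)"]) auto
  qed
  then have "card {f \<in> V \<rightarrow>\<^sub>E {0..m}. \<not> inj_on f V} \<le> card (\<Union>p\<in>?pairs. ?ident p)"
    using V by (intro card_mono) (auto simp: finite_PiE)
  also have "\<dots> \<le> (\<Sum>p\<in>?pairs. card (?ident p))"
    using V by (intro card_UN_le) auto
  also have "\<dots> \<le> (\<Sum>p\<in>?pairs. (m + 1) ^ (card V - 1))"
    by (intro sum_mono card_maps_identifying[OF V]) auto
  also have "\<dots> = card ?pairs * (m + 1) ^ (card V - 1)" by simp
  also have "\<dots> \<le> card (V \<times> V) * (m + 1) ^ (card V - 1)"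
    using V by (intro mult_le_mono1 card_mono) auto
  finally show ?thesis by (simp add: card_cartesian_product)
qed

context finite_strict_poset
begin

lemma linext_binomial_le_chain_maps:
  "card (linear_extensions V P) * ((m + 1) choose card V) \<le> card (chain_maps V P m)"
proof -
  have "card {f \<in> order_maps V P m. inj_on f V} \<le> card (order_maps V P m)"
    using finite_V unfolding order_maps_def by (intro card_mono) (auto simp: finite_PiE)
  then show ?thesis using card_injective_order_maps card_order_maps_eq_chain_maps by simp
qed

lemma chain_maps_le_linext_binomial:
  "card (chain_maps V P m) \<le>
     card (linear_extensions V P) * ((m + 1) choose card V) + card V * card V * (m + 1) ^ (card V - 1)"
proof -
  let ?inj = "{f \<in> order_maps V P m. inj_on f V}" and ?noninj = "{f \<in> V \<rightarrow>\<^sub>E {0..m}. \<not> inj_on f V}"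
  have "order_maps V P m \<subseteq> ?inj \<union> ?noninj" unfolding order_maps_def by blast
  moreover have "finite (?inj \<union> ?noninj)"
    using finite_V unfolding order_maps_def by (simp add: finite_PiE)
  ultimately have "card (order_maps V P m) \<le> card (?inj \<union> ?noninj)" by (rule card_mono[rotated])
  also have "\<dots> \<le> card ?inj + card ?noninj" by (rule card_Un_le)
  finally show ?thesis
    using card_injective_order_maps[of m] card_noninjective_maps[OF finite_V, of m]
      card_order_maps_eq_chain_maps[of m] by linarith
qed

end

section \<open>Comparing numbers of linear extensions\<close>

text \<open>A box of chain-bounded maps separating two posets: both \<open>u\<close> and \<open>v\<close> receive
  values above half of \<open>m = 4nk\<close>, every other point at most \<open>k\<close>.\<close>
definition gap_box :: "'a set \<Rightarrow> 'a \<Rightarrow> 'a \<Rightarrow> nat \<Rightarrow> ('a \<Rightarrow> nat) set" where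
  "gap_box V u v k = PiE V (\<lambda>w. if w = u \<or> w = v then {2 * card V * k + 1..3 * card V * k} else {0..k})"

lemma card_gap_box:
  assumes "finite V" "u \<in> V"
  shows "k ^ card V \<le> card (gap_box V u v k)"
proof -
  have "1 \<le> card V" using assms by (metis One_nat_def Suc_leI card_gt_0_iff empty_iff)
  then have "k \<le> card (if w = u \<or> w = v then {2 * card V * k + 1..3 * card V * k} else {0..k})" for w
    by auto
  then have "(\<Prod>w\<in>V. k) \<le> (\<Prod>w\<in>V. card (if w = u \<or> w = v then {2 * card V * k + 1..3 * card V * k} else {0..k}))"
    by (intro prod_mono) auto
  then show ?thesis using assms(1) unfolding gap_box_def by (simp add: card_PiE)
qed

text \<open>If \<open>u\<close> and \<open>v\<close> are incomparable in \<open>Q\<close>, a chain of \<open>Q\<close> meets at most one of them,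
  so the box consists of chain-bounded maps for \<open>Q\<close> \<dots>\<close>
lemma gap_box_subset_chain_maps:
  assumes V: "finite V" and uv: "u \<in> V" "v \<in> V" and incomp: "\<not> comparable Q u v"
  shows "gap_box V u v k \<subseteq> chain_maps V Q (4 * card V * k)"
proof
  let ?n = "card V" and ?big = "\<lambda>w. w = u \<or> w = v"
  fix g assume g: "g \<in> gap_box V u v k"
  have n_pos: "1 \<le> ?n" using V uv by (metis One_nat_def Suc_leI card_gt_0_iff empty_iff)
  have g_small: "g w \<le> k" if "w \<in> V" "\<not> ?big w" for w
    using g that unfolding gap_box_def by (auto simp: PiE_iff)
  have g_big: "g w \<le> 3 * ?n * k" if w: "w \<in> V" for w
  proof (cases "?big w")
    case True
    then show ?thesis using g w unfolding gap_box_def by (auto simp: PiE_iff)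
  next
    case False
    then have "g w \<le> k" using g_small w by blast
    also have "k \<le> 3 * ?n * k" using n_pos by simp
    finally show ?thesis .
  qed
  have "g w \<le> 4 * ?n * k" if "w \<in> V" for w using g_big[OF that] by simp
  then have "g \<in> V \<rightarrow>\<^sub>E {0..4 * ?n * k}" using g unfolding gap_box_def by (auto simp: PiE_iff)
  moreover have "sum g C \<le> 4 * ?n * k" if C: "C \<subseteq> V" "is_chain Q C" for C
  proof -
    have fin: "finite C" using C V finite_subset by blast
    have "C \<inter> {u, v} \<subseteq> {u} \<or> C \<inter> {u, v} \<subseteq> {v}"
      using C(2) incomp unfolding is_chain_def comparable_def by blast
    then have "sum g (C \<inter> {u, v}) \<le> 3 * ?n * k"
      using g_big uv by (auto simp: subset_singleton_iff)
    moreover have "sum g (C - {u, v}) \<le> card (C - {u, v}) * k"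
      using sum_bounded_above[of "C - {u, v}" g k] g_small C(1) by auto
    moreover have "card (C - {u, v}) * k \<le> ?n * k"
      using C(1) V by (intro mult_le_mono1 card_mono) auto
    moreover have "sum g C = sum g (C \<inter> {u, v}) + sum g (C - {u, v})"
      using fin by (metis Diff_eq sum.Int_Diff)
    ultimately show ?thesis by linarith
  qed
  ultimately show "g \<in> chain_maps V Q (4 * card V * k)" unfolding chain_maps_def by blast
qed

text \<open>\<dots> while the chain \<open>{u, v}\<close> of \<open>P\<close> violates its bound.\<close>
lemma gap_box_disjoint_chain_maps:
  assumes uv: "u \<in> V" "v \<in> V" "u \<noteq> v" and comp: "comparable P u v"
  shows "gap_box V u v k \<inter> chain_maps V P (4 * card V * k) = {}"
proof (rule ccontr)
  assume "gap_box V u v k \<inter> chain_maps V P (4 * card V * k) \<noteq> {}"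
  then obtain g where g: "g \<in> gap_box V u v k" "g \<in> chain_maps V P (4 * card V * k)" by blast
  have bound: "sum g C \<le> 4 * card V * k" if "C \<subseteq> V" "is_chain P C" for C
    using g(2) that unfolding chain_maps_def by blast
  have "is_chain P {u, v}" using comp unfolding is_chain_def comparable_def by blast
  then have "sum g {u, v} \<le> 4 * card V * k" using uv by (intro bound) auto
  then have "g u + g v \<le> 4 * card V * k" using uv(3) by simp
  moreover have "g u > 2 * card V * k" "g v > 2 * card V * k"
    using g(1) uv unfolding gap_box_def by (auto simp: PiE_iff)
  ultimately show False by linarith
qed

lemma chain_maps_gap:
  assumes V: "finite V" and uv: "u \<in> V" "v \<in> V" "u \<noteq> v"
    and comp: "comparable P u v" and incomp: "\<not> comparable Q u v"
    and sub: "\<forall>x\<in>V. \<forall>y\<in>V. x \<noteq> y \<longrightarrow> comparable Q x y \<longrightarrow> comparable P x y"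
  shows "card (chain_maps V P (4 * card V * k)) + k ^ card V \<le> card (chain_maps V Q (4 * card V * k))"
proof -
  let ?m = "4 * card V * k"
  have "card (chain_maps V P ?m) + k ^ card V \<le> card (chain_maps V P ?m) + card (gap_box V u v k)"
    using card_gap_box[OF V uv(1)] by simp
  also have "\<dots> = card (chain_maps V P ?m \<union> gap_box V u v k)"
    using gap_box_disjoint_chain_maps[OF uv comp] finite_chain_maps[OF V]
      finite_subset[OF gap_box_subset_chain_maps[OF V uv(1,2) incomp] finite_chain_maps[OF V]]
    by (simp add: card_Un_disjoint inf_commute)
  also have "\<dots> \<le> card (chain_maps V Q ?m)"
    using chain_maps_antimono[OF sub] gap_box_subset_chain_maps[OF V uv(1,2) incomp] finite_chain_maps[OF V]
    by (intro card_mono) auto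
  finally show ?thesis .
qed

text \<open>For a suitable \<open>k\<close>, the binomial main term at \<open>m = 4nk\<close> beats the error term
  \<open>n\<^sup>2 (m+1)\<^sup>n\<^sup>-\<^sup>1\<close>, both being separated by \<open>k\<^sup>n\<close>.\<close>
lemma binomial_dominates_error:
  fixes n :: nat
  obtains k where "n * n * (4 * n * k + 1) ^ (n - 1) < k ^ n" "k ^ n \<le> (4 * n * k + 1) choose n"
proof -
  define c where "c = n * n * (5 * n) ^ (n - 1)"
  define k where "k = c + 1"
  have "n * n * (4 * n * k + 1) ^ (n - 1) < k ^ n"
  proof (cases "n = 0")
    case False
    have "4 * n * k + 1 \<le> 5 * n * k" using False unfolding k_def by simp
    then have "n * n * (4 * n * k + 1) ^ (n - 1) \<le> n * n * (5 * n * k) ^ (n - 1)"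
      by (simp add: power_mono)
    also have "\<dots> = c * k ^ (n - 1)"
      unfolding c_def power_mult_distrib by (simp add: ac_simps)
    also have "\<dots> < k * k ^ (n - 1)" unfolding k_def by simp
    also have "\<dots> = k ^ n" using False by (simp add: power_eq_if)
    finally show ?thesis .
  qed simp
  moreover have "k ^ n \<le> (4 * n * k + 1) choose n"
  proof (cases "n = 0")
    case False
    have "k * n \<le> 4 * n * k + 1" by simp
    then have "real k * real n \<le> real (4 * n * k + 1)" by (metis of_nat_le_iff of_nat_mult)
    then have "real k \<le> real (4 * n * k + 1) / real n" using False by (simp add: le_divide_eq)
    then have "real k ^ n \<le> (real (4 * n * k + 1) / real n) ^ n"
      by (intro power_mono) auto
    also have "\<dots> \<le> real ((4 * n * k + 1) choose n)"
      by (rule binomial_ge_n_over_k_pow_k) (simp add: k_def)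
    finally show ?thesis by (simp flip: of_nat_power)
  qed simp
  ultimately show ?thesis using that by blast
qed

theorem linear_extensions_mono:
  assumes P: "finite_strict_poset V P" and Q: "finite_strict_poset V Q"
    and sub: "\<forall>x\<in>V. \<forall>y\<in>V. x \<noteq> y \<longrightarrow> comparable Q x y \<longrightarrow> comparable P x y"
  shows "card (linear_extensions V P) \<le> card (linear_extensions V Q)"
proof (rule ccontr)
  let ?n = "card V" and ?eP = "card (linear_extensions V P)" and ?eQ = "card (linear_extensions V Q)"
  assume "\<not> ?eP \<le> ?eQ"
  then have more: "?eQ + 1 \<le> ?eP" by simp
  obtain k where error: "?n * ?n * (4 * ?n * k + 1) ^ (?n - 1) < k ^ ?n"
    and main: "k ^ ?n \<le> (4 * ?n * k + 1) choose ?n"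
    using binomial_dominates_error by blast
  let ?m = "4 * ?n * k"
  have fin: "finite V" using P unfolding finite_strict_poset_def by blast
  have "(?eQ + 1) * ((?m + 1) choose ?n) \<le> ?eP * ((?m + 1) choose ?n)"
    using more by (rule mult_le_mono1)
  also have "\<dots> \<le> card (chain_maps V P ?m)"
    by (rule finite_strict_poset.linext_binomial_le_chain_maps[OF P])
  also have "\<dots> \<le> card (chain_maps V Q ?m)"
    using chain_maps_antimono[OF sub] finite_chain_maps[OF fin] by (rule card_mono[rotated])
  also have "\<dots> \<le> ?eQ * ((?m + 1) choose ?n) + ?n * ?n * (?m + 1) ^ (?n - 1)"
    by (rule finite_strict_poset.chain_maps_le_linext_binomial[OF Q])
  finally have "(?eQ + 1) * ((?m + 1) choose ?n) \<le> ?eQ * ((?m + 1) choose ?n) + ?n * ?n * (?m + 1) ^ (?n - 1)" .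
  then have "(?m + 1) choose ?n \<le> ?n * ?n * (?m + 1) ^ (?n - 1)" by simp
  then show False using error main by linarith
qed

theorem linear_extensions_strict_mono:
  assumes P: "finite_strict_poset V P" and Q: "finite_strict_poset V Q"
    and sub: "\<forall>x\<in>V. \<forall>y\<in>V. x \<noteq> y \<longrightarrow> comparable Q x y \<longrightarrow> comparable P x y"
    and uv: "u \<in> V" "v \<in> V" "u \<noteq> v" and comp: "comparable P u v" and incomp: "\<not> comparable Q u v"
  shows "card (linear_extensions V P) < card (linear_extensions V Q)"
proof (rule ccontr)
  let ?n = "card V" and ?eP = "card (linear_extensions V P)" and ?eQ = "card (linear_extensions V Q)"
  assume "\<not> ?eP < ?eQ"
  then have not_more: "?eQ \<le> ?eP" by simp
  obtain k where error: "?n * ?n * (4 * ?n * k + 1) ^ (?n - 1) < k ^ ?n"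
    using binomial_dominates_error by blast
  let ?m = "4 * ?n * k"
  have fin: "finite V" using P unfolding finite_strict_poset_def by blast
  have "?eQ * ((?m + 1) choose ?n) + k ^ ?n \<le> ?eP * ((?m + 1) choose ?n) + k ^ ?n"
    using not_more by simp
  also have "\<dots> \<le> card (chain_maps V P ?m) + k ^ ?n"
    using finite_strict_poset.linext_binomial_le_chain_maps[OF P] by simp
  also have "\<dots> \<le> card (chain_maps V Q ?m)"
    by (rule chain_maps_gap[OF fin uv comp incomp sub])
  also have "\<dots> \<le> ?eQ * ((?m + 1) choose ?n) + ?n * ?n * (?m + 1) ^ (?n - 1)"
    by (rule finite_strict_poset.chain_maps_le_linext_binomial[OF Q])
  finally show False using error by linarith
qed

section \<open>Orientations of comparability graphs\<close>

lemma edge_endpoints: "simple_graph V E \<Longrightarrow> {u, v} \<in> E \<Longrightarrow> u \<in> V \<and> v \<in> V \<and> u \<noteq> v"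
  unfolding simple_graph_def by (metis doubleton_eq_iff)

lemma acyclic_orientation_poset:
  assumes G: "simple_graph V E" and Or: "acyclic_orientation V E Or"
  shows "finite_strict_poset V (Or\<^sup>+)"
proof
  show "finite V" using G unfolding simple_graph_def by blast
  have "Or \<subseteq> V \<times> V"
    using Or edge_endpoints[OF G] unfolding acyclic_orientation_def by auto
  then show "Or\<^sup>+ \<subseteq> V \<times> V" by (rule trancl_subset_Sigma)
  show "trans (Or\<^sup>+)" by (rule trans_trancl)
  show "irrefl (Or\<^sup>+)" using Or unfolding acyclic_orientation_def by (simp add: acyclic_irrefl)
qed

lemma acyclic_orientation_comparable:
  "acyclic_orientation V E Or \<Longrightarrow> {x, y} \<in> E \<Longrightarrow> comparable (Or\<^sup>+) x y"
  unfolding acyclic_orientation_def comparable_def by blast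

lemma transitive_orientation_iff:
  assumes "acyclic_orientation V E Or"
  shows "transitive_orientation V E Or \<longleftrightarrow>
    (\<forall>x\<in>V. \<forall>y\<in>V. x \<noteq> y \<longrightarrow> comparable (Or\<^sup>+) x y \<longrightarrow> {x, y} \<in> E)"
  using assms acyclic_orientation_comparable[OF assms]
  unfolding transitive_orientation_def comparable_def by blast

lemma comparability_graph_poset:
  assumes "comparability_graph V E"
  obtains R where "acyclic_orientation V E R" "R\<^sup>+ = R" "finite_strict_poset V R"
    "\<forall>x\<in>V. \<forall>y\<in>V. x \<noteq> y \<longrightarrow> (comparable R x y \<longleftrightarrow> {x, y} \<in> E)"
proof -
  have G: "simple_graph V E" using assms unfolding comparability_graph_def by blast
  obtain R where R: "R \<subseteq> V \<times> V" "irrefl R" "trans R"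
    and RE: "\<forall>u\<in>V. \<forall>v\<in>V. u \<noteq> v \<longrightarrow> ({u, v} \<in> E \<longleftrightarrow> (u, v) \<in> R \<or> (v, u) \<in> R)"
    using assms unfolding comparability_graph_def by blast
  have closed: "R\<^sup>+ = R" using R(3) by (rule trancl_id)
  have "acyclic_orientation V E R"
    unfolding acyclic_orientation_def
  proof (intro conjI allI impI)
    fix u v assume uv: "(u, v) \<in> R"
    then have "u \<in> V" "v \<in> V" "u \<noteq> v" using R(1,2) unfolding irrefl_def by auto
    then show "{u, v} \<in> E" using RE uv by blast
  next
    fix u v assume "{u, v} \<in> E"
    then show "(u, v) \<in> R \<or> (v, u) \<in> R" using edge_endpoints[OF G] RE by blast
  next
    show "acyclic R" using R(2) closed by (simp add: acyclic_irrefl)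
  qed
  moreover have "finite_strict_poset V R"
    using G R unfolding simple_graph_def finite_strict_poset_def by blast
  moreover have "\<forall>x\<in>V. \<forall>y\<in>V. x \<noteq> y \<longrightarrow> (comparable R x y \<longleftrightarrow> {x, y} \<in> E)"
    using RE unfolding comparable_def by blast
  ultimately show ?thesis using that closed by blast
qed

theorem theorem3p5:
  fixes V :: "'a set" and E :: "'a set set"
  assumes "comparability_graph V E" and "connected_graph V E"
    and "acyclic_orientation V E Or"
  shows "(\<forall>Or'. acyclic_orientation V E Or' \<longrightarrow> num_linext V Or' \<le> num_linext V Or)
         \<longleftrightarrow> transitive_orientation V E Or"
proof -
  have G: "simple_graph V E" using assms(1) unfolding comparability_graph_def by blast
  obtain R where R: "acyclic_orientation V E R" "R\<^sup>+ = R" "finite_strict_poset V R"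
    and R_comp: "\<forall>x\<in>V. \<forall>y\<in>V. x \<noteq> y \<longrightarrow> (comparable R x y \<longleftrightarrow> {x, y} \<in> E)"
    using comparability_graph_poset[OF assms(1)] by blast
  have R_comp_le: "\<forall>x\<in>V. \<forall>y\<in>V. x \<noteq> y \<longrightarrow> comparable R x y \<longrightarrow> comparable (Or'\<^sup>+) x y"
    if "acyclic_orientation V E Or'" for Or'
    using R_comp acyclic_orientation_comparable[OF that] by blast
  have R_max: "num_linext V Or' \<le> num_linext V R" if Or': "acyclic_orientation V E Or'" for Or'
    using linear_extensions_mono[OF acyclic_orientation_poset[OF G Or'] R(3) R_comp_le[OF Or']] R(2)
    unfolding num_linext_def by simp
  have R_beats: "num_linext V Or < num_linext V R"
    if "x \<in> V" "y \<in> V" "x \<noteq> y" "comparable (Or\<^sup>+) x y" "{x, y} \<notin> E" for x y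
    using linear_extensions_strict_mono[OF acyclic_orientation_poset[OF G assms(3)] R(3)
        R_comp_le[OF assms(3)] that(1-4)] that R_comp R(2)
    unfolding num_linext_def by simp
  show ?thesis
  proof
    assume "\<forall>Or'. acyclic_orientation V E Or' \<longrightarrow> num_linext V Or' \<le> num_linext V Or"
    then have "num_linext V R \<le> num_linext V Or" using R(1) by blast
    then show "transitive_orientation V E Or"
      using R_beats transitive_orientation_iff[OF assms(3)] by (meson not_le)
  next
    assume "transitive_orientation V E Or"
    then have "num_linext V R \<le> num_linext V Or"
      using linear_extensions_mono[OF R(3) acyclic_orientation_poset[OF G assms(3)]] R_comp R(2)
        transitive_orientation_iff[OF assms(3)] unfolding num_linext_def by simp
    then show "\<forall>Or'. acyclic_orientation V E Or' \<longrightarrow> num_linext V Or' \<le> num_linext V Or"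
      using R_max by (meson le_trans)
  qed
qed

end
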